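(* Let $(\mathcal{C},\psi)$ be a t-pair with $\operatorname{typ}(\mathcal{U}^{ii}_{\mathcal{C}\psi})\ne\alpha$. Then $\operatorname{typ}(\mathcal{U}^{id}_{\mathcal{C}\psi})=\operatorname{typ}(\mathcal{U}^{ia}_{\mathcal{C}\psi})=\epsilon$.
   Context: Let $\mathbb{N}=\{0,1,2,\dots\}$; for an integer $k\ge 2$ let $E_k=\{0,1,\dots,k-1\}$; let $\mathcal{P}(\mathbb{N})$ be the set of nonempty finite subsets of $\mathbb{N}$. Let $F$ be a nonempty set (of attribute names). A decision table $T\in\mathcal{M}_k(F)$ is a rectangular table with $n\ge 1$ columns labeled with attributes $f_1,\dots,f_n\in F$ (any two columns labeled with the same attribute are equal), whose rows are pairwise different tuples from $E_k^n$ (the set of rows may be empty), each row being labeled with a set of decisions from $\mathcal{P}(\mathbb{N})$. Write $At(T)=\{f_1,\dots,f_n\}$ and $\Delta(T)$ for the set of rows. For a word $\alpha=(f_{i_1},\delta_1)\cdots(f_{i_m},\delta_m)$ with $f_{i_j}\in At(T)$, $\delta_j\in E_k$, the subtable $T\alpha$ consists of the rows of $T$ having value $\delta_j$ in column $f_{i_j}$ for all $j$ ($T\lambda=T$ for the empty word $\lambda$). Operations on tables: (1) removal of a column from a table with at least two columns (if groups of equal rows appear, only the first row of each group, with its decision set, is kept); (2) changing of decisions: the decision sets attached to rows are replaced arbitrarily by sets from $\mathcal{P}(\mathbb{N})$; (3) permutation of columns: swap two columns together with their attribute labels; (4) duplication of columns: add a copy of a column (with its label) next to it. A set $\mathcal{C}\subseteq\mathcal{M}_k(F)$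 is a closed class if every table obtained from a table of $\mathcal{C}$ by finitely many such operations belongs to $\mathcal{C}$. A decision tree over $\mathcal{M}_k(F)$ is a finite directed tree with a root (unique node with no entering edge) and at least two nodes such that the root and the edges leaving the root are unlabeled, each worker node (neither root nor terminal) is labeled with an attribute from $F$, each edge leaving a worker node is labeled with a number from $E_k$, and each terminal node is labeled with a number from $\mathbb{N}$. For a complete path $\xi$ (root to terminal node) whose worker nodes are labeled $f_{j_1},\dots,f_{j_m}$ in order, with the edges leaving them labeled $\delta_1,\dots,\delta_m$, put $\pi(\xi)=(f_{j_1},\delta_1)\cdots(f_{j_m},\delta_m)$, $\varphi(\xi)=f_{j_1}\cdots f_{j_m}$ (both empty if $m=0$), and let $\tau(\xi)$ be the label of its terminal node. A nondeterministic decision tree for $T$ is a decision tree $\Gamma$ whose worker-node attributes lie in $At(T)$, such that $\bigcup_{\xi}\Delta(T\pi(\xi))=\Delta(T)$ (union over complete paths), and for every row $r\in\Delta(T)$ and every complete path $\xi$ with $r\in\Delta(T\pi(\xi))$, $\tau(\xi)$ belongs to the decision set of $r$. A decision tree is deterministic if exactly one edge leaves the root and the edges leaving each worker node have pairwise different labels; a deterministic decision tree for $T$ is a deterministic decision tree that is a nondeterministic decision tree for $T$. A complexity measure over $\mathcal{M}_k(F)$ is any map $\psi:F^*\to\mathbb{N}$, where $F^*$ is the set of finite words over $F$ including the empty word $\lambda$. For a tree, $\psi(\Gamma)=\max_\xi\psi(\varphi(\xi))$ over complete paths. For $T$ with columns labeled $f_1,\dots,f_n$: $\psi^i(T)=\psi(f_1\cdots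 f_n)$, $\psi^d(T)$ is the minimum complexity of a deterministic decision tree for $T$, $\psi^a(T)$ the minimum complexity of a nondeterministic decision tree for $T$. A t-pair $(\mathcal{C},\psi)$ consists of a closed class $\mathcal{C}\subseteq\mathcal{M}_k(F)$ and a complexity measure $\psi$ over $\mathcal{M}_k(F)$. For $b,c\in\{i,d,a\}$ define the partial function $\mathcal{U}^{bc}_{\mathcal{C}\psi}(n)=\max\{\psi^b(T):T\in\mathcal{C},\psi^c(T)\le n\}$ (defined iff this set is nonempty and finite). For a partial function $g:\mathbb{N}\to\mathbb{N}$ with domain $\mathrm{Dom}(g)$, let $\mathrm{Dom}^+(g)=\{n\in\mathrm{Dom}(g):g(n)\ge n\}$, $\mathrm{Dom}^-(g)=\{n\in\mathrm{Dom}(g):g(n)\le n\}$. Its type $\operatorname{typ}(g)$ is: $\alpha$ if $\mathrm{Dom}(g)$ is infinite and $g$ is bounded above; $\beta$ if $\mathrm{Dom}(g)$ is infinite, $\mathrm{Dom}^+(g)$ is finite and $g$ is unbounded above; $\gamma$ if $\mathrm{Dom}^+(g)$ and $\mathrm{Dom}^-(g)$ are both infinite; $\delta$ if $\mathrm{Dom}(g)$ is infinite and $\mathrm{Dom}^-(g)$ is finite; $\epsilon$ if $\mathrm{Dom}(g)$ is finite. *)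

theory Defs
  imports Main
begin

text \<open>A decision table over attribute type 'f: the list of column labels f_1..f_n,
  and the list of rows (in order), each row a tuple of values together with its
  decision set.  The attribute set F is the (nonempty) type 'f.\<close>

type_synonym 'f dtable = "'f list \<times> (nat list \<times> nat set) list"

definition in_Mk :: "nat \<Rightarrow> 'f dtable \<Rightarrow> bool" where
  "in_Mk k T \<longleftrightarrow>
     (let as = fst T; rs = snd T; n = length as in
       n \<ge> 1 \<and> distinct (map fst rs) \<and>
       (\<forall>(t, D) \<in> set rs. length t = n \<and> (\<forall>x \<in> set t. x < k) \<and> finite D \<and> D \<noteq> {}) \<and>
       (\<forall>i<n. \<forall>j<n. as ! i = as ! j \<longrightarrow> (\<forall>(t, D) \<in> set rs. t ! i = t ! j)))"

definition At :: "'f dtable \<Rightarrow> 'f set" where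
  "At T = set (fst T)"

definition rows :: "'f dtable \<Rightarrow> nat list set" where
  "rows T = fst ` set (snd T)"

primrec dedup :: "(nat list \<times> nat set) list \<Rightarrow> (nat list \<times> nat set) list" where
  "dedup [] = []"
| "dedup (x # rs) = x # filter (\<lambda>p. fst p \<noteq> fst x) (dedup rs)"

definition del_nth :: "nat \<Rightarrow> 'a list \<Rightarrow> 'a list" where
  "del_nth i xs = take i xs @ drop (Suc i) xs"

definition swap_nth :: "nat \<Rightarrow> nat \<Rightarrow> 'a list \<Rightarrow> 'a list" where
  "swap_nth i j xs = xs[i := xs ! j, j := xs ! i]"

definition dup_nth :: "nat \<Rightarrow> 'a list \<Rightarrow> 'a list" where
  "dup_nth i xs = take (Suc i) xs @ [xs ! i] @ drop (Suc i) xs"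

inductive op_step :: "'f dtable \<Rightarrow> 'f dtable \<Rightarrow> bool" where
  remove_col: "i < length as \<Longrightarrow> 2 \<le> length as \<Longrightarrow>
     op_step (as, rs) (del_nth i as, dedup (map (\<lambda>(t, D). (del_nth i t, D)) rs))"
| change_dec: "map fst rs' = map fst rs \<Longrightarrow> (\<forall>(t, D) \<in> set rs'. finite D \<and> D \<noteq> {}) \<Longrightarrow>
     op_step (as, rs) (as, rs')"
| perm_cols: "i < length as \<Longrightarrow> j < length as \<Longrightarrow>
     op_step (as, rs) (swap_nth i j as, map (\<lambda>(t, D). (swap_nth i j t, D)) rs)"
| dup_col: "i < length as \<Longrightarrow>
     op_step (as, rs) (dup_nth i as, map (\<lambda>(t, D). (dup_nth i t, D)) rs)"

definition closed_class :: "nat \<Rightarrow> 'f dtable set \<Rightarrow> bool" where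
  "closed_class k C \<longleftrightarrow> C \<subseteq> {T. in_Mk k T} \<and> (\<forall>T \<in> C. \<forall>T'. op_step\<^sup>*\<^sup>* T T' \<longrightarrow> T' \<in> C)"

text \<open>A non-root node: terminal (labelled with a number) or worker (labelled with an
  attribute, with its outgoing edges, each labelled by a number, to children).
  A tree is the list of children of the (unlabelled) root.\<close>

datatype 'f dnode = Term nat | Work 'f "(nat \<times> 'f dnode) list"

type_synonym 'f dtree = "'f dnode list"

fun wf_node :: "nat \<Rightarrow> 'f dnode \<Rightarrow> bool" where
  "wf_node k (Term m) = True"
| "wf_node k (Work f cs) = (cs \<noteq> [] \<and> (\<forall>p \<in> set cs. fst p < k \<and> wf_node k (snd p)))"

fun det_node :: "'f dnode \<Rightarrow> bool" where
  "det_node (Term m) = True"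
| "det_node (Work f cs) = (distinct (map fst cs) \<and> (\<forall>p \<in> set cs. det_node (snd p)))"

fun node_attrs :: "'f dnode \<Rightarrow> 'f set" where
  "node_attrs (Term m) = {}"
| "node_attrs (Work f cs) = insert f (\<Union>p \<in> set cs. node_attrs (snd p))"

text \<open>Complete paths below a node: the word pi(xi) and the terminal label tau(xi).\<close>
fun node_paths :: "'f dnode \<Rightarrow> (('f \<times> nat) list \<times> nat) list" where
  "node_paths (Term m) = [([], m)]"
| "node_paths (Work f cs) =
     concat (map (\<lambda>p. map (\<lambda>q. ((f, fst p) # fst q, snd q)) (node_paths (snd p))) cs)"

definition wf_tree :: "nat \<Rightarrow> 'f dtree \<Rightarrow> bool" where
  "wf_tree k \<Gamma> \<longleftrightarrow> \<Gamma> \<noteq> [] \<and> (\<forall>c \<in> set \<Gamma>. wf_node k c)"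

definition det_tree :: "'f dtree \<Rightarrow> bool" where
  "det_tree \<Gamma> \<longleftrightarrow> length \<Gamma> = 1 \<and> (\<forall>c \<in> set \<Gamma>. det_node c)"

definition tree_attrs :: "'f dtree \<Rightarrow> 'f set" where
  "tree_attrs \<Gamma> = (\<Union>c \<in> set \<Gamma>. node_attrs c)"

definition tree_paths :: "'f dtree \<Rightarrow> (('f \<times> nat) list \<times> nat) list" where
  "tree_paths \<Gamma> = concat (map node_paths \<Gamma>)"

text \<open>Delta(T alpha): rows of T having value delta in (every/any) column labelled f,
  for each pair (f, delta) of alpha.\<close>
definition subrows :: "'f dtable \<Rightarrow> ('f \<times> nat) list \<Rightarrow> nat list set" where
  "subrows T \<alpha> = {t \<in> rows T. \<forall>(f, \<delta>) \<in> set \<alpha>.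
       \<exists>i < length (fst T). fst T ! i = f \<and> t ! i = \<delta>}"

definition ndt_for :: "nat \<Rightarrow> 'f dtable \<Rightarrow> 'f dtree \<Rightarrow> bool" where
  "ndt_for k T \<Gamma> \<longleftrightarrow> wf_tree k \<Gamma> \<and> tree_attrs \<Gamma> \<subseteq> At T \<and>
     (\<Union>\<xi> \<in> set (tree_paths \<Gamma>). subrows T (fst \<xi>)) = rows T \<and>
     (\<forall>r \<in> set (snd T). \<forall>\<xi> \<in> set (tree_paths \<Gamma>).
        fst r \<in> subrows T (fst \<xi>) \<longrightarrow> snd \<xi> \<in> snd r)"

definition dt_for :: "nat \<Rightarrow> 'f dtable \<Rightarrow> 'f dtree \<Rightarrow> bool" where
  "dt_for k T \<Gamma> \<longleftrightarrow> det_tree \<Gamma> \<and> ndt_for k T \<Gamma>"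

definition tree_cost :: "('f list \<Rightarrow> nat) \<Rightarrow> 'f dtree \<Rightarrow> nat" where
  "tree_cost \<psi> \<Gamma> = Max ((\<lambda>\<xi>. \<psi> (map fst (fst \<xi>))) ` set (tree_paths \<Gamma>))"

definition psi_i :: "('f list \<Rightarrow> nat) \<Rightarrow> 'f dtable \<Rightarrow> nat" where
  "psi_i \<psi> T = \<psi> (fst T)"

definition psi_d :: "nat \<Rightarrow> ('f list \<Rightarrow> nat) \<Rightarrow> 'f dtable \<Rightarrow> nat" where
  "psi_d k \<psi> T = (LEAST m. \<exists>\<Gamma>. dt_for k T \<Gamma> \<and> tree_cost \<psi> \<Gamma> = m)"

definition psi_a :: "nat \<Rightarrow> ('f list \<Rightarrow> nat) \<Rightarrow> 'f dtable \<Rightarrow> nat" where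
  "psi_a k \<psi> T = (LEAST m. \<exists>\<Gamma>. ndt_for k T \<Gamma> \<and> tree_cost \<psi> \<Gamma> = m)"

text \<open>U^{bc}(n) as a partial function (None = undefined).\<close>
definition Ufun :: "'f dtable set \<Rightarrow> ('f dtable \<Rightarrow> nat) \<Rightarrow> ('f dtable \<Rightarrow> nat) \<Rightarrow> nat \<Rightarrow> nat option" where
  "Ufun C \<psi>b \<psi>c n =
     (let S = {\<psi>b T | T. T \<in> C \<and> \<psi>c T \<le> n} in
      if S \<noteq> {} \<and> finite S then Some (Max S) else None)"

datatype ftype = TAlpha | TBeta | TGamma | TDelta | TEpsilon

definition Dom :: "(nat \<Rightarrow> nat option) \<Rightarrow> nat set" where
  "Dom g = {n. g n \<noteq> None}"

definition Dom_plus :: "(nat \<Rightarrow> nat option) \<Rightarrow> nat set" where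
  "Dom_plus g = {n \<in> Dom g. the (g n) \<ge> n}"

definition Dom_minus :: "(nat \<Rightarrow> nat option) \<Rightarrow> nat set" where
  "Dom_minus g = {n \<in> Dom g. the (g n) \<le> n}"

definition bdd_above_pf :: "(nat \<Rightarrow> nat option) \<Rightarrow> bool" where
  "bdd_above_pf g \<longleftrightarrow> (\<exists>B. \<forall>n \<in> Dom g. the (g n) \<le> B)"

definition has_type :: "ftype \<Rightarrow> (nat \<Rightarrow> nat option) \<Rightarrow> bool" where
  "has_type t g = (case t of
      TAlpha \<Rightarrow> infinite (Dom g) \<and> bdd_above_pf g
    | TBeta \<Rightarrow> infinite (Dom g) \<and> finite (Dom_plus g) \<and> \<not> bdd_above_pf g
    | TGamma \<Rightarrow> infinite (Dom_plus g) \<and> infinite (Dom_minus g)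
    | TDelta \<Rightarrow> infinite (Dom g) \<and> finite (Dom_minus g)
    | TEpsilon \<Rightarrow> finite (Dom g))"

definition typ_of :: "(nat \<Rightarrow> nat option) \<Rightarrow> ftype" where
  "typ_of g = (THE t. has_type t g)"

end

theory Submission
  imports Defs
begin

text \<open>Replacing every decision set of a table by {0} is an operation of the closed class; it
  keeps the attribute word, hence psi^i, and the resulting table is solved by the tree with a
  single terminal node, so its deterministic and nondeterministic complexities are at most
  psi(lambda).  If U^ii is not of type alpha, psi^i is unbounded on a nonempty class.  Then for
  every n \<ge> psi(lambda) the set {psi^i T : psi^c T \<le> n} contains all values of psi^i on the class
  and is infinite, so U^id and U^ia are undefined from psi(lambda) on.\<close>

lemma typ_of_finite_Dom:
  assumes "finite (Dom g)"
  shows "typ_of g = TEpsilon"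
  unfolding typ_of_def
proof (rule the_equality)
  show "has_type TEpsilon g" using assms by (simp add: has_type_def)
next
  fix t assume "has_type t g"
  moreover have "finite (Dom_plus g)"
    using assms by (rule rev_finite_subset) (auto simp: Dom_plus_def)
  ultimately show "t = TEpsilon" using assms by (cases t) (auto simp: has_type_def)
qed

lemma typ_of_bdd_above_pf:
  assumes "infinite (Dom g)" and "bdd_above_pf g"
  shows "typ_of g = TAlpha"
  unfolding typ_of_def
proof (rule the_equality)
  show "has_type TAlpha g" using assms by (simp add: has_type_def)
next
  fix t assume "has_type t g"
  obtain B where "\<forall>n \<in> Dom g. the (g n) \<le> B" using assms(2) by (auto simp: bdd_above_pf_def)
  then have "Dom_plus g \<subseteq> {..B}" by (force simp: Dom_plus_def)
  then have fin_plus: "finite (Dom_plus g)" by (rule finite_subset) simp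
  have "Dom g \<subseteq> Dom_plus g \<union> Dom_minus g" by (auto simp: Dom_plus_def Dom_minus_def)
  then have "infinite (Dom_minus g)" using fin_plus assms(1) finite_subset by blast
  with \<open>has_type t g\<close> fin_plus assms show "t = TAlpha" by (cases t) (auto simp: has_type_def)
qed

lemma Ufun_eq:
  "Ufun C f g n = (let S = f ` {T \<in> C. g T \<le> n} in
     if S \<noteq> {} \<and> finite S then Some (Max S) else None)"
proof -
  have "{f T | T. T \<in> C \<and> g T \<le> n} = f ` {T \<in> C. g T \<le> n}" by blast
  then show ?thesis by (simp only: Ufun_def)
qed

lemma mem_Dom_Ufun_iff:
  "n \<in> Dom (Ufun C f g) \<longleftrightarrow> {T \<in> C. g T \<le> n} \<noteq> {} \<and> finite (f ` {T \<in> C. g T \<le> n})"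
  by (simp add: Dom_def Ufun_eq Let_def)

lemma Ufun_le_bound:
  assumes "\<forall>T \<in> C. f T \<le> B" and "n \<in> Dom (Ufun C f g)"
  shows "the (Ufun C f g n) \<le> B"
  using assms by (simp add: mem_Dom_Ufun_iff Ufun_eq Let_def)

lemma typ_of_Ufun_self_finite_image:
  assumes "C \<noteq> {}" and "finite (f ` C)"
  shows "typ_of (Ufun C f f) = TAlpha"
proof (rule typ_of_bdd_above_pf)
  obtain T0 where "T0 \<in> C" using assms(1) by blast
  have "{f T0..} \<subseteq> Dom (Ufun C f f)"
  proof
    fix n assume "n \<in> {f T0..}"
    then have "T0 \<in> {T \<in> C. f T \<le> n}" using \<open>T0 \<in> C\<close> by simp
    moreover have "finite (f ` {T \<in> C. f T \<le> n})"
      by (rule finite_subset[of _ "{..n}"]) auto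
    ultimately show "n \<in> Dom (Ufun C f f)" unfolding mem_Dom_Ufun_iff by blast
  qed
  then show "infinite (Dom (Ufun C f f))" using infinite_Ici finite_subset by blast
  obtain B where bound: "\<forall>T \<in> C. f T \<le> B"
    using assms(2) by (auto simp: finite_nat_set_iff_bounded_le)
  show "bdd_above_pf (Ufun C f f)"
    using Ufun_le_bound[OF bound] by (auto simp: bdd_above_pf_def)
qed

lemma Dom_Ufun_subset_lessThan:
  assumes "infinite (f ` C)" and reduce: "\<forall>T \<in> C. \<exists>T' \<in> C. f T' = f T \<and> g T' \<le> m"
  shows "Dom (Ufun C f g) \<subseteq> {..<m}"
proof
  fix n assume n_Dom: "n \<in> Dom (Ufun C f g)"
  show "n \<in> {..<m}"
  proof (rule ccontr)
    assume "n \<notin> {..<m}"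
    then have "f ` C \<subseteq> f ` {T \<in> C. g T \<le> n}" using reduce by (fastforce simp: image_iff)
    then have "infinite (f ` {T \<in> C. g T \<le> n})" using assms(1) finite_subset by blast
    with n_Dom show False by (simp add: mem_Dom_Ufun_iff)
  qed
qed

lemma finite_Dom_Ufun:
  assumes "typ_of (Ufun C f f) \<noteq> TAlpha"
    and "\<forall>T \<in> C. \<exists>T' \<in> C. f T' = f T \<and> g T' \<le> m"
  shows "finite (Dom (Ufun C f g))"
proof (cases "C = {}")
  case True
  then show ?thesis by (simp add: Dom_def Ufun_eq)
next
  case False
  then have "infinite (f ` C)" using assms(1) typ_of_Ufun_self_finite_image by blast
  then have "Dom (Ufun C f g) \<subseteq> {..<m}" using assms(2) by (rule Dom_Ufun_subset_lessThan)
  then show ?thesis by (rule finite_subset) simp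
qed

lemma psi_a_le_tree_cost: "ndt_for k T \<Gamma> \<Longrightarrow> psi_a k \<psi> T \<le> tree_cost \<psi> \<Gamma>"
  unfolding psi_a_def by (metis (mono_tags, lifting) Least_le)

lemma psi_d_le_tree_cost: "dt_for k T \<Gamma> \<Longrightarrow> psi_d k \<psi> T \<le> tree_cost \<psi> \<Gamma>"
  unfolding psi_d_def by (metis (mono_tags, lifting) Least_le)

lemma tree_cost_Term: "tree_cost \<psi> [Term m] = \<psi> []"
  by (simp add: tree_cost_def tree_paths_def)

definition zero_decisions :: "'f dtable \<Rightarrow> 'f dtable" where
  "zero_decisions T = (fst T, map (\<lambda>(t, D). (t, {0})) (snd T))"

lemma zero_decisions_mem_closed_class:
  assumes "closed_class k C" and "T \<in> C"
  shows "zero_decisions T \<in> C"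
proof -
  obtain as rs where T: "T = (as, rs)" by (cases T)
  have "op_step (as, rs) (as, map (\<lambda>(t, D). (t, {0})) rs)"
    by (rule op_step.change_dec) auto
  then have "op_step\<^sup>*\<^sup>* T (zero_decisions T)" by (simp add: T zero_decisions_def)
  with assms show ?thesis unfolding closed_class_def by blast
qed

lemma psi_i_zero_decisions: "psi_i \<psi> (zero_decisions T) = psi_i \<psi> T"
  by (simp add: psi_i_def zero_decisions_def)

lemma dt_for_zero_decisions_Term: "dt_for k (zero_decisions T) [Term 0]"
  by (auto simp: dt_for_def det_tree_def ndt_for_def wf_tree_def tree_attrs_def tree_paths_def
      subrows_def zero_decisions_def rows_def)

lemma zero_decisions_complexity_le:
  "psi_d k \<psi> (zero_decisions T) \<le> \<psi> []" "psi_a k \<psi> (zero_decisions T) \<le> \<psi> []"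
  using psi_d_le_tree_cost psi_a_le_tree_cost dt_for_zero_decisions_Term tree_cost_Term
  by (metis, metis dt_for_def)

theorem lemma5:
  fixes k :: nat and C :: "'f dtable set" and \<psi> :: "'f list \<Rightarrow> nat"
  assumes "2 \<le> k"
    and "closed_class k C"
    and "typ_of (Ufun C (psi_i \<psi>) (psi_i \<psi>)) \<noteq> TAlpha"
  shows "typ_of (Ufun C (psi_i \<psi>) (psi_d k \<psi>)) = TEpsilon
       \<and> typ_of (Ufun C (psi_i \<psi>) (psi_a k \<psi>)) = TEpsilon"
proof -
  have "\<forall>T \<in> C. \<exists>T' \<in> C. psi_i \<psi> T' = psi_i \<psi> T \<and> psi_d k \<psi> T' \<le> \<psi> []"
    and "\<forall>T \<in> C. \<exists>T' \<in> C. psi_i \<psi> T' = psi_i \<psi> T \<and> psi_a k \<psi> T' \<le> \<psi> []"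
    using zero_decisions_mem_closed_class[OF assms(2)] psi_i_zero_decisions
      zero_decisions_complexity_le by metis+
  then show ?thesis
    using finite_Dom_Ufun[OF assms(3)] typ_of_finite_Dom by metis
qed

end
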